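(* Let $\lambda=2$, $c_0=\ln 4$, $c_2=2^{-26/9}$, and let $F:\mathbb{R}^2\to\mathbb{R}^2$ be $$F(a,b)=\big(-2a-e(a,b),\; b+c_0+e(a,b)\big),\qquad e(a,b)=\ln\!\big(1+c_2e^{-(4a+b)/3}\big).$$ Let $\gamma^{inv}:[2.56,\infty)\to[-0.03,0.03]$ be the $F$-invariant curve described in the context. Let $I$ be the line segment $\{(t,\,2t-\tfrac{2}{3}\ln 2^2): -0.4\le t\le 0\}$ in the $(a,b)$-plane. Then $F^3(I)$ intersects the graph $\{(\gamma^{inv}(b),b): b\ge 2.56\}$ of $\gamma^{inv}$ transversally.
   Context: Set $X=[-0.03,0.03]\times[2.56,\infty)$ in the $(a,b)$-plane, and let $\Gamma$ be the set of functions $\gamma:[2.56,\infty)\to[-0.03,0.03]$ with Lipschitz constant at most $1$; the graph of $\gamma$ is $\{(\gamma(b),b)\}\subset X$. The map $F$ is injective, $F^{-1}$ is defined on $X$, and for $\gamma\in\Gamma$ the set $F^{-1}(\text{graph }\gamma)\cap X$ is again the graph of an element $T\gamma\in\Gamma$; $T$ is a contraction of $\Gamma$ in the sup metric, and $\gamma^{inv}$ denotes its unique fixed point, i.e. the unique $\gamma\in\Gamma$ with $F^{-1}(\text{graph }\gamma)\cap X=\text{graph }\gamma$. (The map $F$ is the recursion $(x,y)\mapsto(y,1+\lambda^2x^2/y)$ written in the coordinates $u=\ln x$, $v=\ln y$, $a=u-v+c_0/3$, $b=2u+v$.) *)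

theory Defs
  imports "HOL-Analysis.Analysis"
begin

definition c0 :: real where "c0 = ln 4"
definition c2 :: real where "c2 = 2 powr (-26/9)"

definition eF :: "real \<Rightarrow> real \<Rightarrow> real" where
  "eF a b = ln (1 + c2 * exp (-(4*a + b)/3))"

definition F :: "real \<times> real \<Rightarrow> real \<times> real" where
  "F p = (case p of (a, b) \<Rightarrow> (-2*a - eF a b, b + c0 + eF a b))"

definition Xset :: "(real \<times> real) set" where
  "Xset = {(a, b). -0.03 \<le> a \<and> a \<le> 0.03 \<and> 2.56 \<le> b}"

text \<open>Gamma: functions [2.56,inf) -> [-0.03,0.03] with Lipschitz constant at most 1
  (only values on [2.56,inf) matter).\<close>
definition Gam :: "(real \<Rightarrow> real) set" where
  "Gam = {\<gamma>. (\<forall>b\<ge>2.56. -0.03 \<le> \<gamma> b \<and> \<gamma> b \<le> 0.03) \<and>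
              (\<forall>b1\<ge>2.56. \<forall>b2\<ge>2.56. \<bar>\<gamma> b1 - \<gamma> b2\<bar> \<le> \<bar>b1 - b2\<bar>)}"

definition graph :: "(real \<Rightarrow> real) \<Rightarrow> (real \<times> real) set" where
  "graph \<gamma> = {(\<gamma> b, b) | b. 2.56 \<le> b}"

definition graph_inv :: "(real \<times> real) set" where
  "graph_inv = (THE G. \<exists>\<gamma>\<in>Gam. G = graph \<gamma> \<and> {p \<in> Xset. F p \<in> G} = G)"

definition segI :: "real \<Rightarrow> real \<times> real" where
  "segI t = (t, 2*t - (2/3) * ln (2^2))"

end

theory Submission
  imports Defs
begin

text \<open>
  With u = 4a + b the map reads F(a,b) = (-2a - eta u, b + c0 + eta u), where
  eta u = ln (1 + c2 exp (-u/3)) is 0.0204-Lipschitz on X. So F is a small perturbation of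
  (a,b) \<mapsto> (-2a, b + c0): it maps the horizontal cone |db| \<le> |da| into itself and expands
  |da| at least by 3/2. Hence two points whose forward orbits stay in X lie in each other's
  vertical cone, and the set of such points meets every line b = const in at most one
  point; a nested-interval argument shows that it meets it in exactly one, so this set is
  the graph of gamma^inv. Along I the orbit is explicit: F^3(I) runs from a > 0.03 (at t = -1/4)
  to a < -0.03 (at t = 0), so it crosses the graph, and its tangent lies strictly inside the
  horizontal cone, hence is transversal to the 1-Lipschitz graph.
\<close>

section \<open>Numerical constants\<close>

lemma c0_eq: "c0 = 2 * ln 2"
  unfolding c0_def using ln_realpow[of 2 2] by simp

lemma c0_pos: "0 < c0"
  unfolding c0_eq by simp

lemma c2_pos: "0 < c2"
  unfolding c2_def by simp

lemma le_powr_divideI: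
  fixes x l :: real
  assumes "0 < x" "0 \<le> l" "0 < n" "l ^ n \<le> x powr k"
  shows "l \<le> x powr (k / n)"
proof (rule ccontr)
  assume "\<not> ?thesis"
  then have "(x powr (k / n)) ^ n < l ^ n"
    using assms(3) by (intro power_strict_mono) auto
  also have "(x powr (k / n)) ^ n = x powr k"
    using assms(1,3) by (simp add: powr_power)
  finally show False using assms(4) by simp
qed

lemma powr_divide_leI:
  fixes x u :: real
  assumes "0 < x" "0 \<le> u" "0 < n" "x powr k \<le> u ^ n"
  shows "x powr (k / n) \<le> u"
proof (rule ccontr)
  assume "\<not> ?thesis"
  then have "u ^ n < (x powr (k / n)) ^ n"
    using assms(2,3) by (intro power_strict_mono) auto
  also have "(x powr (k / n)) ^ n = x powr k"
    using assms(1,3) by (simp add: powr_power)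
  finally show False using assms(4) by simp
qed

lemma c2_le: "c2 \<le> 0.1351"
  unfolding c2_def using powr_divide_leI[of 2 "0.1351" 9 "-26"] by (simp add: powr_minus power_divide)

lemma two_powr_neg_6_ninths: "0.6297 \<le> (2::real) powr (-6/9)"
  using le_powr_divideI[of 2 "0.6297" 9 "-6"] by (simp add: powr_minus power_divide)

lemma two_powr_neg_22_ninths:
  "0.18 \<le> (2::real) powr (-22/9)" "(2::real) powr (-22/9) \<le> 0.19"
  using le_powr_divideI[of 2 "0.18" 9 "-22"] powr_divide_leI[of 2 "0.19" 9 "-22"]
  by (simp_all add: powr_minus power_divide)

lemma two_powr_neg_28_ninths: "(2::real) powr (-28/9) \<le> 0.12"
  using powr_divide_leI[of 2 "0.12" 9 "-28"] by (simp add: powr_minus power_divide)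

lemma two_powr_neg_34_ninths: "(2::real) powr (-34/9) \<le> 0.075"
  using powr_divide_leI[of 2 "0.075" 9 "-34"] by (simp add: powr_minus power_divide)

lemma exp_mult_ln2: "exp (c * ln 2) = 2 powr c"
  by (simp add: powr_def)

lemma exp_neg_c0_third: "exp (-c0/3) = 2 powr (-6/9)"
  unfolding c0_eq powr_def by simp

lemma exp_61_75_ge: "2.21 \<le> exp (61/75::real)"
proof -
  have "(2.21::real) \<le> (1 + 61/1200) ^ 16" by (simp add: power_divide)
  also have "\<dots> \<le> exp (61/1200) ^ 16"
    by (intro power_mono exp_ge_add_one_self) auto
  also have "\<dots> = exp (61/75)"
    using exp_of_nat_mult[of 16 "61/1200::real"] by simp
  finally show ?thesis .
qed

lemma diff_square_mono:
  fixes x y :: real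
  assumes "0 \<le> x" "x \<le> y" "x + y \<le> 1"
  shows "x - x\<^sup>2 \<le> y - y\<^sup>2"
proof -
  have "0 \<le> (y - x) * (1 - x - y)" using assms by simp
  then show ?thesis by (simp add: power2_eq_square algebra_simps)
qed

section \<open>The map F\<close>

definition kappa :: "real \<Rightarrow> real" where
  "kappa u = c2 * exp (-u/3)"

definition eta :: "real \<Rightarrow> real" where
  "eta u = ln (1 + kappa u)"

lemma kappa_pos: "0 < kappa u"
  unfolding kappa_def using c2_pos by simp

lemma kappa_add: "kappa (u + d) = kappa u * exp (-d/3)"
  unfolding kappa_def by (simp add: exp_add[symmetric] field_simps)

lemma kappa_antimono: "u \<le> v \<Longrightarrow> kappa v \<le> kappa u"
  unfolding kappa_def using c2_pos by simp

lemma kappa_le: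
  assumes "2.44 \<le> u"
  shows "kappa u \<le> 0.0612"
proof -
  have "exp (-u/3) \<le> exp (-(61/75))" using assms by simp
  also have "\<dots> \<le> 1 / 2.21" using exp_61_75_ge by (simp add: exp_minus field_simps)
  finally have "kappa u \<le> 0.1351 * (1 / 2.21)"
    unfolding kappa_def using c2_le c2_pos by (intro mult_mono) auto
  then show ?thesis by simp
qed

lemma eta_nonneg: "0 \<le> eta u"
  unfolding eta_def using kappa_pos[of u] by simp

lemma eta_le_kappa: "eta u \<le> kappa u"
  unfolding eta_def using kappa_pos[of u] by (simp add: ln_add_one_self_le_self)

lemma eta_antimono: "u \<le> v \<Longrightarrow> eta v \<le> eta u"
  unfolding eta_def using kappa_antimono[of u v] kappa_pos[of v] by simp

lemma eta_deriv: "(eta has_real_derivative - kappa u / (3 * (1 + kappa u))) (at u)"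
  unfolding eta_def kappa_def using c2_pos
  by (auto intro!: derivative_eq_intros simp: field_simps add_pos_pos)

lemma continuous_on_eta: "continuous_on S eta"
  using eta_deriv by (intro continuous_at_imp_continuous_on) (blast intro: DERIV_isCont)

lemma eta_lipschitz:
  assumes "2.44 \<le> u" "2.44 \<le> v"
  shows "\<bar>eta u - eta v\<bar> \<le> 0.0204 * \<bar>u - v\<bar>"
proof -
  have "norm (eta u - eta v) \<le> 0.0204 * norm (u - v)"
  proof (rule field_differentiable_bound[where S = "{2.44..}"])
    fix w :: real assume "w \<in> {2.44..}"
    then have "kappa w \<le> 0.0612" using kappa_le[of w] by simp
    moreover have "0 < kappa w" by (rule kappa_pos)
    ultimately show "norm (- kappa w / (3 * (1 + kappa w))) \<le> 0.0204"
      by (simp add: field_simps)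
  qed (use assms eta_deriv in \<open>auto intro: has_field_derivative_at_within\<close>)
  then show ?thesis by simp
qed

lemma eF_eq_eta: "eF a b = eta (4*a + b)"
  unfolding eF_def eta_def kappa_def by simp

lemma fst_F: "fst (F p) = -2 * fst p - eta (4 * fst p + snd p)"
  by (cases p) (simp add: F_def eF_eq_eta)

lemma snd_F: "snd (F p) = snd p + c0 + eta (4 * fst p + snd p)"
  by (cases p) (simp add: F_def eF_eq_eta)

lemma F_eq: "F = (\<lambda>p. (-2 * fst p - eta (4 * fst p + snd p), snd p + c0 + eta (4 * fst p + snd p)))"
  by (simp add: fun_eq_iff prod_eq_iff fst_F snd_F)

lemma continuous_on_funpow_F: "continuous_on S (F^^n)"
proof (induction n)
  case (Suc n)
  have "continuous_on UNIV F"
    unfolding F_eq by (intro continuous_intros continuous_on_compose2[OF continuous_on_eta]) auto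
  then show ?case
    using continuous_on_compose2[OF _ Suc.IH subset_UNIV] by (simp add: o_def)
qed (simp add: continuous_on_id)

lemma continuous_on_funpow_F_line: "continuous_on S (\<lambda>a. (F^^n) (a, b))"
  by (rule continuous_on_compose2[OF continuous_on_funpow_F, of _ "\<lambda>a. (a, b)"])
    (auto intro: continuous_intros)

lemma snd_funpow_F_ge: "snd p + n * c0 \<le> snd ((F^^n) p)"
proof (induction n)
  case (Suc n)
  have "snd ((F^^Suc n) p) = snd ((F^^n) p) + c0 + eta (4 * fst ((F^^n) p) + snd ((F^^n) p))"
    by (simp add: snd_F)
  moreover have "0 \<le> eta (4 * fst ((F^^n) p) + snd ((F^^n) p))" by (rule eta_nonneg)
  moreover have "real (Suc n) * c0 = real n * c0 + c0" by (simp add: algebra_simps)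
  ultimately show ?case using Suc.IH by linarith
qed simp

lemma snd_le_snd_funpow_F: "snd p \<le> snd ((F^^n) p)"
proof -
  have "0 \<le> real n * c0" using c0_pos by simp
  then show ?thesis using snd_funpow_F_ge[of p n] by linarith
qed

lemma Xset_iff: "p \<in> Xset \<longleftrightarrow> -0.03 \<le> fst p \<and> fst p \<le> 0.03 \<and> 2.56 \<le> snd p"
  by (cases p) (simp add: Xset_def)

lemma Xset_eq: "Xset = {-0.03..0.03} \<times> {2.56..}"
  by (auto simp: Xset_def)

lemma cone_step:
  assumes "p \<in> Xset" "q \<in> Xset" and cone: "\<bar>snd q - snd p\<bar> \<le> \<bar>fst q - fst p\<bar>"
  shows "3/2 * \<bar>fst q - fst p\<bar> \<le> \<bar>fst (F q) - fst (F p)\<bar>"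
    and "\<bar>snd (F q) - snd (F p)\<bar> \<le> \<bar>fst (F q) - fst (F p)\<bar>"
proof -
  define d where "d = eta (4 * fst q + snd q) - eta (4 * fst p + snd p)"
  have "\<bar>d\<bar> \<le> 0.0204 * \<bar>(4 * fst q + snd q) - (4 * fst p + snd p)\<bar>"
    unfolding d_def using assms(1,2) by (intro eta_lipschitz) (auto simp: Xset_def)
  also have "\<dots> \<le> 0.0204 * (5 * \<bar>fst q - fst p\<bar>)"
    using cone by (intro mult_left_mono) (simp_all add: abs_le_iff abs_if split: if_splits)
  finally have d: "\<bar>d\<bar> \<le> 0.102 * \<bar>fst q - fst p\<bar>" by simp
  have "fst (F q) - fst (F p) = -2 * (fst q - fst p) - d"
    and "snd (F q) - snd (F p) = (snd q - snd p) + d"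
    unfolding fst_F snd_F d_def by simp_all
  then show "3/2 * \<bar>fst q - fst p\<bar> \<le> \<bar>fst (F q) - fst (F p)\<bar>"
    and "\<bar>snd (F q) - snd (F p)\<bar> \<le> \<bar>fst (F q) - fst (F p)\<bar>"
    using d cone by (auto simp: abs_if split: if_splits)
qed

lemma cone_funpow_F:
  assumes "\<forall>k<n. (F^^k) p \<in> Xset \<and> (F^^k) q \<in> Xset"
    and cone: "\<bar>snd q - snd p\<bar> \<le> \<bar>fst q - fst p\<bar>"
  shows "(3/2)^n * \<bar>fst q - fst p\<bar> \<le> \<bar>fst ((F^^n) q) - fst ((F^^n) p)\<bar>
       \<and> \<bar>snd ((F^^n) q) - snd ((F^^n) p)\<bar> \<le> \<bar>fst ((F^^n) q) - fst ((F^^n) p)\<bar>"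
  using assms(1)
proof (induction n)
  case 0
  then show ?case using cone by simp
next
  case (Suc n)
  then have IH: "(3/2)^n * \<bar>fst q - fst p\<bar> \<le> \<bar>fst ((F^^n) q) - fst ((F^^n) p)\<bar>"
      "\<bar>snd ((F^^n) q) - snd ((F^^n) p)\<bar> \<le> \<bar>fst ((F^^n) q) - fst ((F^^n) p)\<bar>"
    and X: "(F^^n) p \<in> Xset" "(F^^n) q \<in> Xset" by auto
  note step = cone_step[OF X IH(2)]
  have "(3/2)^Suc n * \<bar>fst q - fst p\<bar> = 3/2 * ((3/2)^n * \<bar>fst q - fst p\<bar>)"
    by simp
  also have "\<dots> \<le> 3/2 * \<bar>fst ((F^^n) q) - fst ((F^^n) p)\<bar>"
    using IH(1) by (rule mult_left_mono) simp
  also have "\<dots> \<le> \<bar>fst ((F^^Suc n) q) - fst ((F^^Suc n) p)\<bar>"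
    using step(1) by simp
  finally show ?case using step(2) by simp
qed

section \<open>The invariant curve\<close>

definition stable_set :: "(real \<times> real) set" where
  "stable_set = {p. \<forall>n. (F^^n) p \<in> Xset}"

lemma stable_set_subset_Xset: "stable_set \<subseteq> Xset"
  unfolding stable_set_def by (auto dest: spec[of _ 0])

lemma stable_set_lipschitz:
  assumes "p \<in> stable_set" "q \<in> stable_set"
  shows "\<bar>fst q - fst p\<bar> \<le> \<bar>snd q - snd p\<bar>"
proof (rule ccontr)
  assume "\<not> ?thesis"
  then have cone: "\<bar>snd q - snd p\<bar> \<le> \<bar>fst q - fst p\<bar>" and pos: "0 < \<bar>fst q - fst p\<bar>"
    by linarith+
  obtain n where n: "0.06 / \<bar>fst q - fst p\<bar> < (3/2::real)^n"
    using real_arch_pow[of "3/2::real"] by auto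
  have "\<forall>k<n. (F^^k) p \<in> Xset \<and> (F^^k) q \<in> Xset"
    using assms unfolding stable_set_def by auto
  then have "(3/2)^n * \<bar>fst q - fst p\<bar> \<le> \<bar>fst ((F^^n) q) - fst ((F^^n) p)\<bar>"
    using cone_funpow_F cone by blast
  also have "\<dots> \<le> 0.06"
    using assms unfolding stable_set_def by (auto simp: Xset_iff abs_if dest!: spec[of _ n])
  finally show False using n pos by (simp add: divide_less_eq)
qed

text \<open>
  F maps (rho b, b) to the left of X, while it maps the left edge (-0.03, b) to the right of
  rho on the image line. So a segment of the line b whose n-th image runs from the left edge to
  the graph of rho contains a subsegment with the same property for n + 1.
\<close>

definition rho :: "real \<Rightarrow> real" where
  "rho b = 3/200 - eta (3/50 + b) / 2"

lemma continuous_on_rho: "continuous_on S rho"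
  unfolding rho_def by (intro continuous_intros continuous_on_compose2[OF continuous_on_eta]) auto

lemma rho_bounds:
  assumes "2.56 \<le> b"
  shows "-0.03 < rho b" "rho b \<le> 3/200"
proof -
  have "eta (3/50 + b) \<le> kappa (3/50 + b)" by (rule eta_le_kappa)
  also have "\<dots> \<le> 0.0612" using assms by (intro kappa_le) simp
  finally have "eta (3/50 + b) \<le> 0.0612" .
  then show "-0.03 < rho b" unfolding rho_def by simp
  show "rho b \<le> 3/200" unfolding rho_def using eta_nonneg by simp
qed

lemma fst_F_rho:
  assumes "2.56 \<le> b"
  shows "fst (F (rho b, b)) \<le> -0.03"
proof -
  have "eta (3/50 + b) \<le> eta (4 * rho b + b)"
    using rho_bounds[OF assms] by (intro eta_antimono) auto
  then show ?thesis by (simp add: fst_F rho_def)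
qed

lemma rho_le_fst_F_left:
  assumes b: "2.56 \<le> b"
  shows "rho (snd (F (-0.03, b))) \<le> fst (F (-0.03, b))"
proof -
  define y where "y = kappa (b - 3/25)"
  define z where "z = kappa (3/50 + snd (F (-0.03, b)))"
  have y: "0 < y" "y \<le> 153/2500"
    unfolding y_def using b kappa_le[of "b - 3/25"] by (simp_all add: kappa_pos)
  have fst: "fst (F (-0.03, b)) = 3/50 - ln (1 + y)"
    and snd: "snd (F (-0.03, b)) = b + c0 + ln (1 + y)"
    by (simp_all add: fst_F snd_F eta_def y_def)
  have ln_y: "0 \<le> ln (1 + y)" "ln (1 + y) \<le> y"
    using y by (simp_all add: ln_add_one_self_le_self)
  have z: "0 < z" "z \<le> 153/2500"
    unfolding z_def snd using b ln_y c0_pos kappa_le[of "3/50 + (b + c0 + ln (1 + y))"]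
    by (simp_all add: kappa_pos)
  have "3/50 + snd (F (-0.03, b)) = (b - 3/25) + (9/50 + c0 + ln (1 + y))"
    using snd by simp
  then have "z = y * exp (-(9/50 + c0 + ln (1 + y))/3)"
    unfolding z_def by (simp only: kappa_add flip: y_def)
  also have "exp (-(9/50 + c0 + ln (1 + y))/3) = exp (-(9/50 + ln (1 + y))/3) * exp (-c0/3)"
    by (subst exp_add[symmetric]) (simp add: field_simps)
  finally have z_eq: "z = y * (exp (-(9/50 + ln (1 + y))/3) * exp (-c0/3))"
    by simp
  have "0.9196 \<le> exp (-(9/50 + ln (1 + y))/3)"
    using exp_ge_add_one_self[of "-(9/50 + ln (1 + y))/3"] ln_y y by (simp add: field_simps)
  moreover have "0.6297 \<le> exp (-c0/3)"
    unfolding exp_neg_c0_third by (rule two_powr_neg_6_ninths)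
  ultimately have "0.9196 * 0.6297 \<le> exp (-(9/50 + ln (1 + y))/3) * exp (-c0/3)"
    by (intro mult_mono) auto
  then have "y * (0.9196 * 0.6297) \<le> z"
    unfolding z_eq using y by (intro mult_left_mono) auto
  then have k: "579/1000 * y \<le> z" using y by simp
  have "579/1000 * y - (579/1000 * y)\<^sup>2 \<le> z - z\<^sup>2"
    using k y z by (intro diff_square_mono) auto
  also have "z - z\<^sup>2 \<le> ln (1 + z)"
    using z by (intro ln_one_plus_pos_lower_bound) auto
  finally have ln_z: "579/1000 * y - 335241/1000000 * y\<^sup>2 \<le> ln (1 + z)"
    by (simp add: power2_eq_square)
  have "y\<^sup>2 \<le> 153/2500 * y" using y by (simp add: power2_eq_square)
  then have "y - (579/1000 * y - 335241/1000000 * y\<^sup>2) / 2 \<le> 9/200"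
    using y by argo
  then have "ln (1 + y) - ln (1 + z) / 2 \<le> 9/200"
    using ln_y ln_z by argo
  then show ?thesis
    unfolding fst rho_def z_def[symmetric] eta_def by simp
qed

definition stay_set :: "real \<Rightarrow> nat \<Rightarrow> real set" where
  "stay_set b n = {a. \<forall>k\<le>n. (F^^k) (a, b) \<in> Xset}"

lemma stay_set_antimono: "m \<le> n \<Longrightarrow> stay_set b n \<subseteq> stay_set b m"
  unfolding stay_set_def by auto

lemma compact_stay_set: "compact (stay_set b n)"
  unfolding compact_eq_bounded_closed
proof
  have "stay_set b n \<subseteq> {-0.03..0.03}"
    unfolding stay_set_def Xset_iff by (auto dest: spec[of _ 0])
  then show "bounded (stay_set b n)"
    using bounded_closed_interval bounded_subset by blast
  have "stay_set b n = (\<Inter>k\<in>{..n}. (\<lambda>a. (F^^k) (a, b)) -` Xset)"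
    unfolding stay_set_def by auto
  moreover have "closed Xset"
    unfolding Xset_eq by (intro closed_Times closed_atLeastAtMost closed_atLeast)
  ultimately show "closed (stay_set b n)"
    by (auto intro!: closed_INT closed_vimage continuous_on_funpow_F_line)
qed

lemma inj_on_fst_funpow_F: "inj_on (\<lambda>a. fst ((F^^Suc n) (a, b))) (stay_set b n)"
proof (rule inj_onI)
  fix x y assume "x \<in> stay_set b n" "y \<in> stay_set b n"
    and eq: "fst ((F^^Suc n) (x, b)) = fst ((F^^Suc n) (y, b))"
  then have "\<forall>k<Suc n. (F^^k) (x, b) \<in> Xset \<and> (F^^k) (y, b) \<in> Xset"
    unfolding stay_set_def by auto
  from cone_funpow_F[OF this] have "(3/2)^Suc n * \<bar>y - x\<bar> \<le> 0"
    using eq by simp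
  moreover have "0 < (3/2::real)^n" by simp
  ultimately show "x = y" by (auto simp: mult_le_0_iff)
qed

lemma segment_subset_stay_set_Suc:
  assumes b: "2.56 \<le> b" and seg: "closed_segment L R \<subseteq> stay_set b n"
    and "fst ((F^^Suc n) (L, b)) \<in> {-0.03..0.03}" "fst ((F^^Suc n) (R, b)) \<in> {-0.03..0.03}"
  shows "closed_segment L R \<subseteq> stay_set b (Suc n)"
proof
  fix a assume a: "a \<in> closed_segment L R"
  define g where "g a = fst ((F^^Suc n) (a, b))" for a
  have "inj_on g (closed_segment L R)"
    using inj_on_subset[OF inj_on_fst_funpow_F seg] unfolding g_def .
  then have "g ` closed_segment L R = closed_segment (g L) (g R)"
    unfolding g_def by (intro continuous_injective_image_segment_1 continuous_on_fst
        continuous_on_funpow_F_line)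
  also have "\<dots> \<subseteq> {-0.03..0.03}"
    using assms(3,4) unfolding g_def by (auto simp: closed_segment_eq_real_ivl)
  finally have "fst ((F^^Suc n) (a, b)) \<in> {-0.03..0.03}"
    using a unfolding g_def by blast
  moreover have "2.56 \<le> snd ((F^^Suc n) (a, b))"
    using snd_le_snd_funpow_F[of "(a, b)" "Suc n"] b by simp
  moreover have "a \<in> stay_set b n" using a seg by blast
  ultimately show "a \<in> stay_set b (Suc n)"
    unfolding stay_set_def by (auto simp: le_Suc_eq Xset_iff)
qed

lemma stay_set_segment_step:
  assumes b: "2.56 \<le> b" and seg: "closed_segment L R \<subseteq> stay_set b n"
    and L: "fst ((F^^n) (L, b)) = -0.03"
    and R: "fst ((F^^n) (R, b)) = rho (snd ((F^^n) (R, b)))"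
  shows "\<exists>L' R'. closed_segment L' R' \<subseteq> stay_set b (Suc n)
           \<and> fst ((F^^Suc n) (L', b)) = -0.03
           \<and> fst ((F^^Suc n) (R', b)) = rho (snd ((F^^Suc n) (R', b)))"
proof -
  define g where "g a = fst ((F^^Suc n) (a, b))" for a
  define h where "h a = snd ((F^^Suc n) (a, b))" for a
  have h_ge: "2.56 \<le> h a" for a
    using snd_le_snd_funpow_F[of "(a, b)" "Suc n"] b unfolding h_def by simp
  have cont_g: "continuous_on S g" and cont_h: "continuous_on S h" for S
    unfolding g_def h_def
    by (rule continuous_on_fst continuous_on_snd continuous_on_funpow_F_line)+
  obtain bL where pL: "(F^^n) (L, b) = (-0.03, bL)"
    using L by (metis prod.collapse)
  obtain bR where pR: "(F^^n) (R, b) = (rho bR, bR)"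
    using R by (metis prod.collapse)
  have "(F^^n) (L, b) \<in> Xset" "(F^^n) (R, b) \<in> Xset"
    using seg unfolding stay_set_def by auto
  then have "2.56 \<le> bL" "2.56 \<le> bR"
    unfolding pL pR by (simp_all add: Xset_iff)
  then have gL: "rho (h L) \<le> g L" and gR: "g R \<le> -0.03"
    using rho_le_fst_F_left[of bL] fst_F_rho[of bR] unfolding g_def h_def by (simp_all add: pL pR)
  have "continuous_on S (\<lambda>a. g a - rho (h a))" for S
    by (intro continuous_on_diff cont_g continuous_on_compose2[OF continuous_on_rho cont_h]) auto
  moreover have "0 \<in> closed_segment (g L - rho (h L)) (g R - rho (h R))"
    using gL gR rho_bounds(1)[OF h_ge[of R]] by (simp add: closed_segment_eq_real_ivl)
  ultimately obtain R' where R': "R' \<in> closed_segment L R" and gR': "g R' = rho (h R')"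
    using IVT'_closed_segment_real[of 0 "\<lambda>a. g a - rho (h a)" L R] by auto
  have "-0.03 \<in> closed_segment (g R') (g R)"
    using gR' gR rho_bounds[OF h_ge[of R']] by (simp add: closed_segment_eq_real_ivl)
  then obtain L' where L': "L' \<in> closed_segment R' R" and gL': "g L' = -0.03"
    using IVT'_closed_segment_real[of "-0.03" g R' R] cont_g by auto
  have "closed_segment R' R \<subseteq> closed_segment L R"
    using R' by (intro closed_segment_subset) auto
  then have "closed_segment L' R' \<subseteq> closed_segment L R"
    using R' L' by (intro closed_segment_subset) auto
  then have "closed_segment L' R' \<subseteq> stay_set b (Suc n)"
    using segment_subset_stay_set_Suc[OF b _, of L' R' n] seg gL' gR' rho_bounds[OF h_ge[of R']]
    unfolding g_def h_def by auto
  then show ?thesis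
    using gL' gR' unfolding g_def h_def by blast
qed

lemma stay_set_contains_segment:
  assumes b: "2.56 \<le> b"
  shows "\<exists>L R. closed_segment L R \<subseteq> stay_set b n
           \<and> fst ((F^^n) (L, b)) = -0.03 \<and> fst ((F^^n) (R, b)) = rho (snd ((F^^n) (R, b)))"
proof (induction n)
  case 0
  have "closed_segment (-0.03) (rho b) \<subseteq> stay_set b 0"
    using rho_bounds[OF b] b by (auto simp: stay_set_def closed_segment_eq_real_ivl Xset_iff)
  then show ?case by force
next
  case (Suc n)
  then show ?case using stay_set_segment_step[OF b] by blast
qed

lemma stable_set_meets_line:
  assumes "2.56 \<le> b"
  shows "\<exists>a. (a, b) \<in> stable_set"
proof -
  have "\<Inter>(range (stay_set b)) \<noteq> {}"
  proof (rule compact_nest)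
    show "stay_set b n \<noteq> {}" for n
      using stay_set_contains_segment[OF assms, of n] by fastforce
  qed (simp_all add: compact_stay_set stay_set_antimono)
  then show ?thesis
    unfolding stable_set_def stay_set_def by blast
qed

lemma graph_eq_stable_set:
  assumes "graph \<gamma> \<subseteq> stable_set"
  shows "graph \<gamma> = stable_set"
proof
  show "stable_set \<subseteq> graph \<gamma>"
  proof
    fix p assume p: "p \<in> stable_set"
    then have b: "2.56 \<le> snd p"
      using stable_set_subset_Xset by (auto simp: Xset_iff)
    then have "(\<gamma> (snd p), snd p) \<in> stable_set"
      using assms unfolding graph_def by blast
    then have "fst p = \<gamma> (snd p)"
      using stable_set_lipschitz[OF p] by fastforce
    then show "p \<in> graph \<gamma>"
      using b unfolding graph_def by (metis (mono_tags, lifting) mem_Collect_eq prod.collapse)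
  qed
qed (rule assms)

definition stable_curve :: "real \<Rightarrow> real" where
  "stable_curve b = (SOME a. (a, b) \<in> stable_set)"

lemma stable_curve_in_stable_set: "2.56 \<le> b \<Longrightarrow> (stable_curve b, b) \<in> stable_set"
  unfolding stable_curve_def using stable_set_meets_line by (rule someI_ex)

lemma graph_stable_curve: "graph stable_curve = stable_set"
  by (rule graph_eq_stable_set) (auto simp: graph_def stable_curve_in_stable_set)

lemma stable_curve_in_Gam: "stable_curve \<in> Gam"
proof -
  have "(stable_curve b, b) \<in> Xset" if "2.56 \<le> b" for b
    using stable_curve_in_stable_set[OF that] stable_set_subset_Xset by blast
  moreover have "\<bar>stable_curve b1 - stable_curve b2\<bar> \<le> \<bar>b1 - b2\<bar>"
    if "2.56 \<le> b1" "2.56 \<le> b2" for b1 b2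
    using stable_set_lipschitz[OF stable_curve_in_stable_set[OF that(2)]
        stable_curve_in_stable_set[OF that(1)]]
    by simp
  ultimately show ?thesis
    unfolding Gam_def by (auto simp: Xset_iff)
qed

lemma continuous_on_stable_curve: "continuous_on {2.56..} stable_curve"
proof (rule lipschitz_on_continuous_on[where L = 1], rule lipschitz_onI)
  fix x y :: real assume "x \<in> {2.56..}" "y \<in> {2.56..}"
  then show "dist (stable_curve x) (stable_curve y) \<le> 1 * dist x y"
    using stable_curve_in_Gam unfolding Gam_def dist_real_def by auto
qed simp

lemma stable_set_invariant: "{p \<in> Xset. F p \<in> stable_set} = stable_set"
proof -
  have "(F^^n) (F p) = (F^^Suc n) p" for n p
    by (simp add: funpow_Suc_right del: funpow.simps)
  then have "F p \<in> stable_set \<longleftrightarrow> (\<forall>n. (F^^Suc n) p \<in> Xset)" for p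
    unfolding stable_set_def by simp
  moreover have "(\<forall>n. (F^^n) p \<in> Xset) \<longleftrightarrow> p \<in> Xset \<and> (\<forall>n. (F^^Suc n) p \<in> Xset)" for p
    by (metis funpow_0 not0_implies_Suc)
  ultimately show ?thesis
    unfolding stable_set_def by auto
qed

lemma graph_inv_eq_stable_set: "graph_inv = stable_set"
  unfolding graph_inv_def
proof (rule the_equality)
  show "\<exists>\<gamma>\<in>Gam. stable_set = graph \<gamma> \<and> {p \<in> Xset. F p \<in> stable_set} = stable_set"
    using stable_curve_in_Gam graph_stable_curve stable_set_invariant by auto
next
  fix G assume "\<exists>\<gamma>\<in>Gam. G = graph \<gamma> \<and> {p \<in> Xset. F p \<in> G} = G"
  then obtain \<gamma> where G: "G = graph \<gamma>" and inv: "{p \<in> Xset. F p \<in> G} = G"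
    by blast
  have "(F^^n) p \<in> G" if "p \<in> G" for p n
    using that inv by (induction n) auto
  then have "G \<subseteq> stable_set"
    using inv unfolding stable_set_def by auto
  then show "G = stable_set"
    unfolding G by (rule graph_eq_stable_set)
qed

section \<open>The orbit of the segment I\<close>

text \<open>xi_k t is the value of kappa at the k-th point of the orbit of segI t.\<close>

definition xi0 :: "real \<Rightarrow> real" where
  "xi0 t = 2 powr (-22/9) * exp (-2*t)"

definition xi1 :: "real \<Rightarrow> real" where
  "xi1 t = 2 powr (-28/9) * exp (2*t) * (1 + xi0 t)"

definition xi2 :: "real \<Rightarrow> real" where
  "xi2 t = 2 powr (-34/9) * exp (-6*t) * (1 + xi1 t) / (1 + xi0 t)^3"

lemma xi0_pos: "0 < xi0 t"
  unfolding xi0_def by simp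

lemma xi1_pos: "0 < xi1 t"
  unfolding xi1_def using xi0_pos[of t] by (simp add: add_pos_pos)

lemma xi2_pos: "0 < xi2 t"
  unfolding xi2_def using xi0_pos[of t] xi1_pos[of t] by (simp add: add_pos_pos)

lemma segI_eq: "segI t = (t, 2*t - 4/3 * ln 2)"
  unfolding segI_def using ln_realpow[of 2 2] by simp

lemma kappa_segI: "kappa (4 * fst (segI t) + snd (segI t)) = xi0 t"
proof -
  have arg: "-(4 * t + (2*t - 4/3 * ln 2))/3 = -2*t + 4/9 * ln 2"
    by (simp add: field_simps)
  have "kappa (4 * t + (2*t - 4/3 * ln 2)) = 2 powr (-26/9) * (exp (-2*t) * 2 powr (4/9))"
    unfolding kappa_def c2_def arg exp_add exp_mult_ln2 ..
  then show ?thesis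
    unfolding segI_eq xi0_def by (simp add: powr_add[symmetric])
qed

lemma F_segI: "F (segI t) = (-2*t - ln (1 + xi0 t), 2*t + 2/3 * ln 2 + ln (1 + xi0 t))"
  using kappa_segI[of t] unfolding F_eq eta_def c0_eq by (simp add: segI_eq)

lemma kappa_F_segI: "kappa (4 * fst (F (segI t)) + snd (F (segI t))) = xi1 t"
proof -
  define L0 where "L0 = ln (1 + xi0 t)"
  have arg: "-(4 * (-2*t - L0) + (2*t + 2/3 * ln 2 + L0))/3 = 2*t + (-2/9) * ln 2 + L0"
    by (simp add: field_simps)
  have "exp L0 = 1 + xi0 t"
    unfolding L0_def using xi0_pos[of t] by (simp add: add_pos_pos)
  then have "kappa (4 * (-2*t - L0) + (2*t + 2/3 * ln 2 + L0))
      = 2 powr (-26/9) * (exp (2*t) * 2 powr (-2/9) * (1 + xi0 t))"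
    unfolding kappa_def c2_def arg exp_add exp_mult_ln2 by simp
  then show ?thesis
    unfolding F_segI xi1_def L0_def by (simp add: powr_add[symmetric])
qed

lemma F2_segI:
  "F (F (segI t)) = (4*t + 2 * ln (1 + xi0 t) - ln (1 + xi1 t),
                      2*t + 8/3 * ln 2 + ln (1 + xi0 t) + ln (1 + xi1 t))"
  using kappa_F_segI[of t] unfolding prod_eq_iff fst_F[of "F (segI t)"] snd_F[of "F (segI t)"]
    eta_def c0_eq
  by (simp add: F_segI)

lemma kappa_F2_segI: "kappa (4 * fst (F (F (segI t))) + snd (F (F (segI t)))) = xi2 t"
proof -
  define L0 where "L0 = ln (1 + xi0 t)"
  define L1 where "L1 = ln (1 + xi1 t)"
  have arg: "-(4 * (4*t + 2 * L0 - L1) + (2*t + 8/3 * ln 2 + L0 + L1))/3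
      = -6*t + (-8/9) * ln 2 - real 3 * L0 + L1"
    by (simp add: field_simps)
  have "exp (real 3 * L0) = (1 + xi0 t)^3" "exp L1 = 1 + xi1 t"
    unfolding L0_def L1_def exp_of_nat_mult using xi0_pos[of t] xi1_pos[of t]
    by (simp_all add: add_pos_pos)
  then have "kappa (4 * (4*t + 2 * L0 - L1) + (2*t + 8/3 * ln 2 + L0 + L1))
      = 2 powr (-26/9) * (exp (-6*t) * 2 powr (-8/9) / (1 + xi0 t)^3 * (1 + xi1 t))"
    unfolding kappa_def c2_def arg exp_add exp_diff exp_mult_ln2 by simp
  then show ?thesis
    unfolding F2_segI xi2_def L0_def L1_def by (simp add: powr_add[symmetric])
qed

lemma fst_F3_segI:
  "fst ((F^^3) (segI t)) = -8*t - 4 * ln (1 + xi0 t) + 2 * ln (1 + xi1 t) - ln (1 + xi2 t)"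
proof -
  have F3: "(F^^3) (segI t) = F (F (F (segI t)))"
    by (simp add: numeral_3_eq_3)
  show ?thesis
    unfolding F3 fst_F[of "F (F (segI t))"] eta_def kappa_F2_segI by (simp add: F2_segI)
qed

lemma fst_F3_segI_0: "fst ((F^^3) (segI 0)) < -0.03"
proof -
  have x0: "0.18 \<le> xi0 0" "xi0 0 \<le> 0.19"
    unfolding xi0_def using two_powr_neg_22_ninths by simp_all
  have "xi1 0 \<le> 0.12 * (1 + 0.19)"
    unfolding xi1_def using two_powr_neg_28_ninths x0 xi0_pos[of 0] by (intro mult_mono) auto
  moreover have "ln (1 + xi1 0) \<le> xi1 0"
    using xi1_pos[of 0] by (simp add: ln_add_one_self_le_self)
  moreover have "0.18 - 0.18\<^sup>2 \<le> xi0 0 - (xi0 0)\<^sup>2"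
    using x0 by (intro diff_square_mono) auto
  moreover have "xi0 0 - (xi0 0)\<^sup>2 \<le> ln (1 + xi0 0)"
    using x0 by (intro ln_one_plus_pos_lower_bound) auto
  moreover have "0 \<le> ln (1 + xi2 0)"
    using xi2_pos[of 0] by simp
  ultimately show ?thesis
    unfolding fst_F3_segI by (simp add: power2_eq_square)
qed

lemma fst_F3_segI_neg_quarter: "0.03 < fst ((F^^3) (segI (-1/4)))"
proof -
  have e: "exp (1/2::real) \<le> 1.75"
    using exp_bound[of "1/2"] by (simp add: power2_eq_square)
  have "exp (3/2::real) = exp (1/2) ^ 3"
    by (simp add: exp_of_nat_mult[symmetric])
  also have "\<dots> \<le> 1.75 ^ 3"
    using e by (intro power_mono) auto
  finally have e3: "exp (3/2::real) \<le> 5.36" by (simp add: power_divide)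
  have x0: "xi0 (-1/4) \<le> 0.19 * 1.75"
    unfolding xi0_def using two_powr_neg_22_ninths e by (intro mult_mono) auto
  have "xi1 (-1/4) \<le> 0.12 * 1 * (1 + 0.19 * 1.75)"
    unfolding xi1_def using two_powr_neg_28_ninths x0 xi0_pos[of "-1/4"]
    by (intro mult_mono) auto
  then have "xi2 (-1/4) \<le> 0.075 * 5.36 * (1 + 0.12 * 1 * (1 + 0.19 * 1.75)) / 1"
    unfolding xi2_def using two_powr_neg_34_ninths e3 xi0_pos[of "-1/4"] xi1_pos[of "-1/4"]
    by (intro frac_le mult_mono) auto
  moreover have "ln (1 + xi2 (-1/4)) \<le> xi2 (-1/4)"
    using xi2_pos[of "-1/4"] by (simp add: ln_add_one_self_le_self)
  moreover have "ln (1 + xi0 (-1/4)) \<le> xi0 (-1/4)"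
    using xi0_pos[of "-1/4"] by (simp add: ln_add_one_self_le_self)
  moreover have "0 \<le> ln (1 + xi1 (-1/4))"
    using xi1_pos[of "-1/4"] by simp
  ultimately show ?thesis
    unfolding fst_F3_segI using x0 by simp
qed

lemma snd_F3_segI_ge: "-1/4 \<le> t \<Longrightarrow> 2.56 \<le> snd ((F^^3) (segI t))"
  using snd_funpow_F_ge[of "segI t" 3] ln2_ge_two_thirds
  unfolding segI_eq c0_eq by simp

lemma F3_segI_meets_stable_set: "\<exists>t\<in>{-1/4..0}. (F^^3) (segI t) \<in> stable_set"
proof -
  define \<phi> where "\<phi> t = fst ((F^^3) (segI t)) - stable_curve (snd ((F^^3) (segI t)))" for t
  have "continuous_on {-1/4..0} (\<lambda>t. (F^^3) (segI t))"
    unfolding segI_eq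
    by (intro continuous_on_compose2[OF continuous_on_funpow_F] continuous_intros) auto
  then have "continuous_on {-1/4..0} \<phi>"
    unfolding \<phi>_def using snd_F3_segI_ge
    by (intro continuous_intros continuous_on_compose2[OF continuous_on_stable_curve]) auto
  moreover have bound: "-0.03 \<le> stable_curve b \<and> stable_curve b \<le> 0.03" if "2.56 \<le> b" for b
    using stable_curve_in_Gam that unfolding Gam_def by auto
  have "\<phi> 0 \<le> 0"
    using bound[OF snd_F3_segI_ge[of 0]] fst_F3_segI_0 unfolding \<phi>_def by simp
  moreover have "0 \<le> \<phi> (-1/4)"
    using bound[OF snd_F3_segI_ge[of "-1/4"]] fst_F3_segI_neg_quarter unfolding \<phi>_def by simp
  ultimately obtain t where t: "-1/4 \<le> t" "t \<le> 0" "\<phi> t = 0"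
    using IVT2'[of \<phi> 0 0 "-1/4"] by auto
  then have "(F^^3) (segI t) \<in> graph stable_curve"
    using snd_F3_segI_ge[OF t(1)] unfolding graph_def \<phi>_def
    by (metis (mono_tags, lifting) eq_iff_diff_eq_0 mem_Collect_eq prod.collapse)
  then show ?thesis
    using t graph_stable_curve by auto
qed

lemma has_real_derivative_F_comp:
  assumes da: "((\<lambda>t. fst (P t)) has_real_derivative da) (at t)"
    and db: "((\<lambda>t. snd (P t)) has_real_derivative db) (at t)"
    and s: "s = kappa (4 * fst (P t) + snd (P t)) / (1 + kappa (4 * fst (P t) + snd (P t)))"
  shows "((\<lambda>t. fst (F (P t))) has_real_derivative -2 * da + s/3 * (4*da + db)) (at t)"
    and "((\<lambda>t. snd (F (P t))) has_real_derivative db - s/3 * (4*da + db)) (at t)"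
proof -
  have "((\<lambda>t. 4 * fst (P t) + snd (P t)) has_real_derivative 4*da + db) (at t)"
    using da db by (auto intro!: derivative_eq_intros)
  from DERIV_chain2[OF eta_deriv this]
  have eta: "((\<lambda>t. eta (4 * fst (P t) + snd (P t))) has_real_derivative -s/3 * (4*da + db)) (at t)"
    unfolding s by (simp add: field_simps)
  show "((\<lambda>t. fst (F (P t))) has_real_derivative -2 * da + s/3 * (4*da + db)) (at t)"
    unfolding fst_F using da eta by (auto intro!: derivative_eq_intros)
  show "((\<lambda>t. snd (F (P t))) has_real_derivative db - s/3 * (4*da + db)) (at t)"
    unfolding snd_F using db eta by (auto intro!: derivative_eq_intros)
qed

lemma xi1_xi2_bounds:
  assumes "-0.4 \<le> t" "t \<le> 0"
  shows "xi1 t \<le> 1/3" "xi2 t \<le> 3"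
proof -
  have "exp (-2*t) \<le> exp 1" "exp (2*t) \<le> 1" using assms by simp_all
  then have "exp (-2*t) \<le> 3" using exp_le by linarith
  then have "xi0 t \<le> 0.19 * 3"
    unfolding xi0_def using two_powr_neg_22_ninths by (intro mult_mono) auto
  then have "xi1 t \<le> 0.12 * 1 * (1 + 0.19 * 3)"
    using \<open>exp (2*t) \<le> 1\<close> two_powr_neg_28_ninths xi0_pos[of t]
    unfolding xi1_def by (intro mult_mono) auto
  then show x1: "xi1 t \<le> 1/3" by simp
  have "exp (-6*t) \<le> exp 1 ^ 3"
    using assms by (simp add: exp_of_nat_mult[symmetric])
  also have "\<dots> \<le> 3 ^ 3"
    using exp_le by (intro power_mono) auto
  finally have "exp (-6*t) \<le> 27" by simp
  then have "xi2 t \<le> 0.075 * 27 * (1 + 1/3) / 1"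
    unfolding xi2_def using two_powr_neg_34_ninths x1 xi0_pos[of t] xi1_pos[of t]
    by (intro frac_le mult_mono) auto
  then show "xi2 t \<le> 3" by simp
qed

lemma transversality_bound:
  fixes s1 s2 :: real
  assumes "0 \<le> s1" "s1 \<le> 1/4" "0 \<le> s2" "s2 \<le> 3/4"
  shows "\<bar>2 + 2 * s1 - 6 * s2 + 2 * (s1 * s2)\<bar> < \<bar>-8 + 4 * s1 + 6 * s2 - 2 * (s1 * s2)\<bar>"
proof -
  have p: "0 \<le> s1 * s2" using assms by simp
  then have neg: "-8 + 4 * s1 + 6 * s2 - 2 * (s1 * s2) < 0" using assms by linarith
  then show ?thesis
    unfolding abs_of_neg[OF neg] abs_less_iff using assms p by linarith
qed

lemma F3_segI_transversal:
  assumes t: "-0.4 \<le> t" "t \<le> 0"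
  shows "\<exists>v. (((F ^^ 3) \<circ> segI) has_vector_derivative v) (at t within {-0.4..0})
           \<and> \<bar>snd v\<bar> < \<bar>fst v\<bar>"
proof -
  define s0 where "s0 = xi0 t / (1 + xi0 t)"
  define s1 where "s1 = xi1 t / (1 + xi1 t)"
  define s2 where "s2 = xi2 t / (1 + xi2 t)"
  define da1 db1 where "da1 = -2 + 2 * s0" and "db1 = 2 - 2 * s0"
  define da2 db2 where "da2 = -2 * da1 + s1/3 * (4*da1 + db1)" and "db2 = db1 - s1/3 * (4*da1 + db1)"
  define da3 db3 where "da3 = -2 * da2 + s2/3 * (4*da2 + db2)" and "db3 = db2 - s2/3 * (4*da2 + db2)"
  have "((\<lambda>t. fst (segI t)) has_real_derivative 1) (at t)"
    and "((\<lambda>t. snd (segI t)) has_real_derivative 2) (at t)"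
    unfolding segI_eq by (auto intro!: derivative_eq_intros)
  from has_real_derivative_F_comp[OF this s0_def[folded kappa_segI]]
  have "((\<lambda>t. fst (F (segI t))) has_real_derivative da1) (at t)"
    and "((\<lambda>t. snd (F (segI t))) has_real_derivative db1) (at t)"
    unfolding da1_def db1_def by (simp_all add: algebra_simps)
  from has_real_derivative_F_comp[OF this s1_def[folded kappa_F_segI]]
  have "((\<lambda>t. fst (F (F (segI t)))) has_real_derivative da2) (at t)"
    and "((\<lambda>t. snd (F (F (segI t)))) has_real_derivative db2) (at t)"
    unfolding da2_def db2_def .
  from has_real_derivative_F_comp[OF this s2_def[folded kappa_F2_segI]]
  have "((\<lambda>t. fst (F (F (F (segI t))))) has_real_derivative da3) (at t)"
    and "((\<lambda>t. snd (F (F (F (segI t))))) has_real_derivative db3) (at t)"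
    unfolding da3_def db3_def .
  from has_vector_derivative_Pair[OF this[unfolded has_real_derivative_iff_has_vector_derivative]]
  have "(((F ^^ 3) \<circ> segI) has_vector_derivative (da3, db3)) (at t within {-0.4..0})"
    by (auto simp: numeral_3_eq_3 o_def intro: has_vector_derivative_at_within)
  moreover have "\<bar>db3\<bar> < \<bar>da3\<bar>"
  proof -
    have "0 \<le> s1" "s1 \<le> 1/4"
      unfolding s1_def using xi1_pos[of t] xi1_xi2_bounds(1)[OF t] by (auto simp: field_simps)
    moreover have "0 \<le> s2" "s2 \<le> 3/4"
      unfolding s2_def using xi2_pos[of t] xi1_xi2_bounds(2)[OF t] by (auto simp: field_simps)
    ultimately have "\<bar>(1 - s0) * (2 + 2 * s1 - 6 * s2 + 2 * (s1 * s2))\<bar>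
        < \<bar>(1 - s0) * (-8 + 4 * s1 + 6 * s2 - 2 * (s1 * s2))\<bar>"
      unfolding abs_mult using transversality_bound[of s1 s2] xi0_pos[of t]
      by (intro mult_strict_left_mono) (auto simp: s0_def)
    moreover have "da3 = (1 - s0) * (-8 + 4 * s1 + 6 * s2 - 2 * (s1 * s2))"
      and "db3 = (1 - s0) * (2 + 2 * s1 - 6 * s2 + 2 * (s1 * s2))"
      unfolding da3_def db3_def da2_def db2_def da1_def db1_def by (simp_all add: algebra_simps)
    ultimately show ?thesis by simp
  qed
  ultimately show ?thesis by auto
qed

theorem lemma1:
  shows "(\<exists>t\<in>{-0.4..0}. (F ^^ 3) (segI t) \<in> graph_inv) \<and>
         (\<forall>t\<in>{-0.4..0}. (F ^^ 3) (segI t) \<in> graph_inv \<longrightarrow>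
            (\<exists>v. (((F ^^ 3) \<circ> segI) has_vector_derivative v) (at t within {-0.4..0}) \<and>
                 \<bar>snd v\<bar> < \<bar>fst v\<bar>))"
proof -
  obtain t where "t \<in> {-1/4..0}" "(F^^3) (segI t) \<in> stable_set"
    using F3_segI_meets_stable_set by blast
  then have "\<exists>t\<in>{-0.4..0}. (F ^^ 3) (segI t) \<in> graph_inv"
    unfolding graph_inv_eq_stable_set by (intro bexI[of _ t]) auto
  then show ?thesis
    using F3_segI_transversal by simp
qed

end
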